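(* Let $L,R\in\mathrm{SL}_2(\mathbb{N}_0)$ be such that $(L,R)$ is a left-right pair. Then every tree (connected component) of the graph $\mathcal{F}(L,R)$ is rooted, i.e. it contains a vertex of indegree $0$. Equivalently, no vertex $z\in\mathcal{D}_0$ has infinitely many ancestors in $\mathcal{F}(L,R)$.
   Context: $\mathbb{N}_0=\{0,1,2,\dots\}$ and $\mathrm{SL}_2(\mathbb{N}_0)$ is the set of $2\times 2$ matrices $\begin{pmatrix} a & b\\ c & d\end{pmatrix}$ with $a,b,c,d\in\mathbb{N}_0$ and $ad-bc=1$; such a matrix $T$ acts on $\overline{\mathbb{C}}=\mathbb{C}\cup\{\infty\}$ by $T(z)=\frac{az+b}{cz+d}$. Let $\mathcal{D}_0=\{x+iy : x>0,\ y>0\}$; every $T\in\mathrm{SL}_2(\mathbb{N}_0)$ satisfies $T(\mathcal{D}_0)\subseteq\mathcal{D}_0$. A pair $(L,R)$ in $\mathrm{SL}_2(\mathbb{N}_0)$ is a left-right pair if $L(\mathcal{D}_0)\cap R(\mathcal{D}_0)=\emptyset$. The directed graph $\mathcal{F}(L,R)$ has vertex set $\mathcal{D}_0$ and edge set $\{(z,L(z)) : z\in\mathcal{D}_0\}\cup\{(z,R(z)) : z\in\mathcal{D}_0\}$. When $(L,R)$ is a left-right pair, it is known that $\mathcal{F}(L,R)$ is a disjoint union of infinite binary trees, each of which is either rooted (every vertex has outdegree 2, exactly one vertex has indegree 0 and all others have indegree 1) or rootless (every vertex has outdegree 2 and indegree 1). A vertex $w$ is an ancestor of $z$ if there is a directed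 path from $w$ to $z$ in $\mathcal{F}(L,R)$. *)

theory Defs
  imports Complex_Main
begin

text \<open>A 2x2 matrix (a b; c d) with entries in N_0 is represented as the tuple (a,b,c,d).\<close>
type_synonym mat2 = "nat \<times> nat \<times> nat \<times> nat"

definition SL2N0 :: "mat2 set" where
  "SL2N0 = {(a,b,c,d). int a * int d - int b * int c = 1}"

definition moeb :: "mat2 \<Rightarrow> complex \<Rightarrow> complex" where
  "moeb T z = (case T of (a,b,c,d) \<Rightarrow> (of_nat a * z + of_nat b) / (of_nat c * z + of_nat d))"

definition D0 :: "complex set" where
  "D0 = {z. Re z > 0 \<and> Im z > 0}"

definition left_right_pair :: "mat2 \<Rightarrow> mat2 \<Rightarrow> bool" where
  "left_right_pair L R \<longleftrightarrow> moeb L ` D0 \<inter> moeb R ` D0 = {}"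

definition Fedges :: "mat2 \<Rightarrow> mat2 \<Rightarrow> (complex \<times> complex) set" where
  "Fedges L R = {(z, moeb L z) | z. z \<in> D0} \<union> {(z, moeb R z) | z. z \<in> D0}"

definition ancestors :: "mat2 \<Rightarrow> mat2 \<Rightarrow> complex \<Rightarrow> complex set" where
  "ancestors L R z = {w. (w, z) \<in> (Fedges L R)\<^sup>+}"

definition indegree_zero :: "mat2 \<Rightarrow> mat2 \<Rightarrow> complex \<Rightarrow> bool" where
  "indegree_zero L R r \<longleftrightarrow> (\<nexists>u. (u, r) \<in> Fedges L R)"

definition same_component :: "mat2 \<Rightarrow> mat2 \<Rightarrow> complex \<Rightarrow> complex \<Rightarrow> bool" where
  "same_component L R u v \<longleftrightarrow> (u, v) \<in> (Fedges L R \<union> (Fedges L R)\<inverse>)\<^sup>*"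

end

theory Submission
  imports Defs "HOL-Library.Product_Lexorder"
begin

text \<open>
  For T = (a, b, c, d) in SL_2(N_0) one has Im (T w) = Im w / |c w + d|^2, and T w = w + b
  when c = 0. So every T other than the identity moves each point of D0 strictly down or,
  at the same height, strictly to the right; as neither member of a left-right pair is the identity,
  F(L, R) is acyclic. An ancestor w of z satisfies z = T w for a product T of copies of L and R, and
  applying the rows of T^-1 to z bounds the entries of T in terms of z alone. There are thus
  finitely many such T, each injective, so z has finitely many ancestors; a finite acyclic set of
  ancestors contains a source, the root of the tree of z.
\<close>

lemma SL2N0_iff: "(a, b, c, d) \<in> SL2N0 \<longleftrightarrow> a * d = b * c + 1"
proof -
  have "int a * int d - int b * int c = 1 \<longleftrightarrow> int (a * d) = int (b * c + 1)" by auto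
  then show ?thesis unfolding SL2N0_def of_nat_eq_iff by simp
qed

lemma SL2N0_det:
  assumes "(a, b, c, d) \<in> SL2N0"
  shows "of_nat a * of_nat d - of_nat b * of_nat c = (1 :: 'a :: comm_ring_1)"
  using arg_cong[where f = "of_nat :: nat \<Rightarrow> 'a", OF assms[unfolded SL2N0_iff]] by (simp add: algebra_simps)

lemma SL2N0_diagonal_pos:
  assumes "(a, b, c, d) \<in> SL2N0"
  shows "0 < a" "0 < d"
  using assms unfolding SL2N0_iff by (metis add_gr_0 less_one mult_is_0 neq0_conv)+

lemma Im_moeb:
  assumes "(a, b, c, d) \<in> SL2N0"
  shows "Im (moeb (a, b, c, d) w) = Im w / (cmod (of_nat c * w + of_nat d))\<^sup>2"
proof -
  have "real a * real d - real b * real c = 1" by (rule SL2N0_det[OF assms])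
  then have "real a * real d * Im w - real b * real c * Im w = Im w"
    by (metis left_diff_distrib mult_1)
  then show ?thesis
    unfolding moeb_def by (simp add: Im_divide cmod_power2 algebra_simps)
qed

lemma Re_moeb:
  "Re (moeb (a, b, c, d) w) =
    (real a * real c * (cmod w)\<^sup>2 + (real a * real d + real b * real c) * Re w + real b * real d)
    / (cmod (of_nat c * w + of_nat d))\<^sup>2"
  unfolding moeb_def
  by (simp add: Re_divide cmod_power2 algebra_simps power2_eq_square[of "Re w"] power2_eq_square[of "Im w"])

lemma cmod_moeb_denominator_ge:
  "real d + real c * Re w \<le> cmod (of_nat c * w + of_nat d)"
  using complex_Re_le_cmod[of "of_nat c * w + of_nat d"] by simp

lemma moeb_denominator_nonzero:
  assumes "(a, b, c, d) \<in> SL2N0" "w \<in> D0"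
  shows "of_nat c * w + of_nat d \<noteq> 0"
proof -
  have "0 < real d + real c * Re w"
    using SL2N0_diagonal_pos(2)[OF assms(1)] assms(2) by (simp add: D0_def add_pos_nonneg)
  then show ?thesis using cmod_moeb_denominator_ge[of d c w] by auto
qed

lemma moeb_in_D0:
  assumes "T \<in> SL2N0" "w \<in> D0"
  shows "moeb T w \<in> D0"
proof -
  obtain a b c d where T: "T = (a, b, c, d)" by (cases T)
  have "0 < a" "0 < d" using SL2N0_diagonal_pos assms(1) T by auto
  then have "0 < real a * real d * Re w" using assms(2) by (simp add: D0_def)
  then have "0 < real a * real c * (cmod w)\<^sup>2 + (real a * real d + real b * real c) * Re w + real b * real d"
    using assms(2) unfolding D0_def distrib_right
    by (intro add_pos_nonneg add_nonneg_pos) auto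
  moreover have "0 < cmod (of_nat c * w + of_nat d)"
    using moeb_denominator_nonzero assms T by auto
  ultimately show ?thesis
    using assms unfolding T D0_def mem_Collect_eq Re_moeb Im_moeb[OF assms(1)[unfolded T]] by simp
qed

text \<open>T^-1 = (d, -b; -c, a) maps the vector (T w, 1) to (w, 1) / (c w + d).\<close>

lemma moeb_inverse_rows:
  assumes "(a, b, c, d) \<in> SL2N0" "of_nat c * w + of_nat d \<noteq> 0"
  shows "of_nat a - of_nat c * moeb (a, b, c, d) w = 1 / (of_nat c * w + of_nat d)"
    and "of_nat d * moeb (a, b, c, d) w - of_nat b = w / (of_nat c * w + of_nat d)"
  using assms(2) SL2N0_det[OF assms(1), where 'a = complex]
  by (simp_all add: moeb_def field_simps)

lemma moeb_lex_decreasing: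
  assumes "T \<in> SL2N0" "T \<noteq> (1, 0, 0, 1)" "w \<in> D0"
  shows "(Im (moeb T w), - Re (moeb T w)) < (Im w, - Re w)"
proof -
  obtain a b c d where T: "T = (a, b, c, d)" by (cases T)
  have det: "a * d = b * c + 1" using assms(1) T SL2N0_iff by simp
  have w: "0 < Re w" "0 < Im w" using assms(3) by (auto simp: D0_def)
  show ?thesis
  proof (cases "c = 0")
    case True
    with det have "a = 1" "d = 1" by simp_all
    with True T assms(2) have "0 < b" by auto
    then show ?thesis using True \<open>a = 1\<close> \<open>d = 1\<close> T by (simp add: moeb_def)
  next
    case False
    have "1 \<le> real d" using SL2N0_diagonal_pos(2)[OF assms(1)[unfolded T]] by simp
    moreover have "0 < real c * Re w" using False w by simp
    ultimately have "1 < real d + real c * Re w" by linarith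
    then have "1 < cmod (of_nat c * w + of_nat d)"
      using cmod_moeb_denominator_ge by (meson less_le_trans)
    then have "Im w / (cmod (of_nat c * w + of_nat d))\<^sup>2 < Im w"
      using w by (simp add: divide_less_eq one_less_power)
    then show ?thesis unfolding T Im_moeb[OF assms(1)[unfolded T]] by simp
  qed
qed

lemma moeb_inverse:
  assumes "(a, b, c, d) \<in> SL2N0" "w \<in> D0"
  shows "w = (of_nat d * moeb (a, b, c, d) w - of_nat b) / (of_nat a - of_nat c * moeb (a, b, c, d) w)"
  using moeb_inverse_rows[OF assms(1) moeb_denominator_nonzero[OF assms]]
    moeb_denominator_nonzero[OF assms]
  by simp

lemma inj_on_moeb:
  assumes "T \<in> SL2N0"
  shows "inj_on (moeb T) D0"
proof (rule inj_onI)
  fix v w assume "v \<in> D0" "w \<in> D0" "moeb T v = moeb T w"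
  then show "v = w" using moeb_inverse assms by (cases T) metis
qed

definition mat2_mult :: "mat2 \<Rightarrow> mat2 \<Rightarrow> mat2" where
  "mat2_mult S T = (case S of (a, b, c, d) \<Rightarrow> case T of (a', b', c', d') \<Rightarrow>
     (a * a' + b * c', a * b' + b * d', c * a' + d * c', c * b' + d * d'))"

lemma SL2N0_mult:
  assumes "S \<in> SL2N0" "T \<in> SL2N0"
  shows "mat2_mult S T \<in> SL2N0"
proof -
  obtain a b c d a' b' c' d' where "S = (a, b, c, d)" "T = (a', b', c', d')"
    by (cases S, cases T)
  moreover have "(int a * int a' + int b * int c') * (int c * int b' + int d * int d')
      - (int a * int b' + int b * int d') * (int c * int a' + int d * int c')
    = (int a * int d - int b * int c) * (int a' * int d' - int b' * int c')"
    by (simp add: algebra_simps)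
  ultimately show ?thesis using assms unfolding SL2N0_def mat2_mult_def by simp
qed

lemma moeb_mult:
  assumes "T \<in> SL2N0" "w \<in> D0"
  shows "moeb S (moeb T w) = moeb (mat2_mult S T) w"
proof -
  obtain a b c d a' b' c' d' where ST: "S = (a, b, c, d)" "T = (a', b', c', d')"
    by (cases S, cases T)
  define N where "N = of_nat a' * w + of_nat b'"
  define D where "D = of_nat c' * w + of_nat d'"
  have D: "D \<noteq> 0" unfolding D_def using moeb_denominator_nonzero assms ST by simp
  have "moeb S (moeb T w) = (of_nat a * (N / D) + of_nat b) / (of_nat c * (N / D) + of_nat d)"
    unfolding ST moeb_def N_def D_def by simp
  also have "\<dots> = ((of_nat a * N + of_nat b * D) / D) / ((of_nat c * N + of_nat d * D) / D)"
    using D by (simp add: divide_add_eq_iff)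
  also have "\<dots> = (of_nat a * N + of_nat b * D) / (of_nat c * N + of_nat d * D)"
    using D by simp
  also have "\<dots> = moeb (mat2_mult S T) w"
    unfolding ST moeb_def mat2_mult_def N_def D_def by (simp add: algebra_simps)
  finally show ?thesis .
qed

lemma moeb_preimage_inequalities:
  assumes T: "(a, b, c, d) \<in> SL2N0" and w: "w \<in> D0" and z: "moeb (a, b, c, d) w = z"
  shows "real c * real d * Im z \<le> 1" "real a \<le> 1 + real c * Re z" "real b < real d * Re z"
proof -
  define D where "D = of_nat c * w + of_nat d"
  define q where "q = of_nat a - of_nat c * z"
  have D: "D \<noteq> 0" unfolding D_def by (rule moeb_denominator_nonzero[OF T w])
  have w_pos: "0 < Re w" "0 < Im w" using w by (auto simp: D0_def)
  have d_pos: "1 \<le> real d" using SL2N0_diagonal_pos(2)[OF T] by simp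
  have "0 \<le> real c * Re w" using w_pos by simp
  then have "real d \<le> cmod D" using cmod_moeb_denominator_ge[of d c w] unfolding D_def by linarith
  moreover have "q = 1 / D"
    unfolding q_def D_def z[symmetric] by (rule moeb_inverse_rows(1)[OF T D[unfolded D_def]])
  ultimately have dq: "real d * cmod q \<le> 1"
    using D by (simp add: norm_divide)
  have q_le: "cmod q \<le> 1"
    using mult_right_mono[OF d_pos norm_ge_zero[of q]] dq by linarith
  have "real c * Im z \<le> cmod q"
    using abs_Im_le_cmod[of q] unfolding q_def by simp
  then have "real d * (real c * Im z) \<le> 1"
    using dq d_pos by (meson mult_left_mono order_trans of_nat_0_le_iff)
  then show "real c * real d * Im z \<le> 1" by (simp add: algebra_simps)
  show "real a \<le> 1 + real c * Re z"
    using complex_Re_le_cmod[of q] q_le unfolding q_def by simp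
  have "Re (w / D) = (real c * ((Re w)\<^sup>2 + (Im w)\<^sup>2) + real d * Re w) / ((Re D)\<^sup>2 + (Im D)\<^sup>2)"
    unfolding D_def by (simp add: Re_divide algebra_simps power2_eq_square)
  moreover have "0 < (Re D)\<^sup>2 + (Im D)\<^sup>2" using D by (simp add: sum_power2_gt_zero_iff complex_eq_iff)
  ultimately have "0 < Re (w / D)"
    using w_pos d_pos by (simp add: add_nonneg_pos)
  moreover have "of_nat d * z - of_nat b = w / D"
    unfolding D_def z[symmetric] by (rule moeb_inverse_rows(2)[OF T D[unfolded D_def]])
  from arg_cong[where f = Re, OF this] have "real d * Re z - real b = Re (w / D)" by simp
  ultimately show "real b < real d * Re z" by simp
qed

lemma moeb_preimage_entries_le:
  assumes T: "(a, b, c, d) \<in> SL2N0" and "w \<in> D0" and z: "moeb (a, b, c, d) w = z"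
  shows "\<forall>k \<in> {a, b, c, d}. real k \<le> (1 + Re z) * (1 + 1 / Im z)"
proof -
  note ineq = moeb_preimage_inequalities[OF assms]
  have z_pos: "0 < Re z" "0 < Im z" using z moeb_in_D0[OF T \<open>w \<in> D0\<close>] by (auto simp: D0_def)
  have d_pos: "1 \<le> real d" using SL2N0_diagonal_pos(2)[OF T] by simp
  have "real c * Im z \<le> real c * Im z * real d"
    using mult_left_mono[OF d_pos, of "real c * Im z"] z_pos by simp
  then have c: "real c * Im z \<le> 1" using ineq(1) by (simp add: algebra_simps)
  have d: "real d * Im z \<le> 1 + Im z"
  proof (cases "c = 0")
    case True
    then show ?thesis using T by (simp add: SL2N0_iff)
  next
    case False
    then have "1 \<le> real c" by simp
    then have "real d * Im z \<le> real c * (real d * Im z)"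
      using mult_right_mono[of 1 "real c" "real d * Im z"] z_pos by simp
    then show ?thesis using ineq(1) z_pos by (simp add: mult.assoc)
  qed
  have "real a * Im z \<le> (1 + real c * Re z) * Im z"
    using ineq(2) z_pos by (simp add: mult_right_mono)
  also have "\<dots> = Im z + (real c * Im z) * Re z" by (simp add: algebra_simps)
  also have "\<dots> \<le> Im z + Re z" using c z_pos by (simp add: mult_left_le_one_le)
  finally have a: "real a * Im z \<le> Im z + Re z" .
  have "real b * Im z \<le> Re z * (real d * Im z)"
    using ineq(3) z_pos by (simp add: algebra_simps)
  also have "\<dots> \<le> Re z * (1 + Im z)" using d z_pos by simp
  finally have b: "real b * Im z \<le> Re z * (1 + Im z)" .
  have "real k \<le> (1 + Re z) * (1 + 1 / Im z)" if "real k * Im z \<le> (1 + Re z) * (1 + Im z)" for k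
    using that z_pos by (simp add: field_simps)
  moreover have "1 \<le> (1 + Re z) * (1 + Im z)" "1 + Im z \<le> (1 + Re z) * (1 + Im z)"
    "Im z + Re z \<le> (1 + Re z) * (1 + Im z)" "Re z * (1 + Im z) \<le> (1 + Re z) * (1 + Im z)"
    using z_pos by (simp_all add: algebra_simps)
  ultimately show ?thesis using a b c d by (auto intro: order_trans)
qed

lemma finite_SL2N0_reaching: "finite {T \<in> SL2N0. \<exists>w \<in> D0. moeb T w = z}"
proof -
  define n where "n = nat \<lceil>(1 + Re z) * (1 + 1 / Im z)\<rceil>"
  have "{T \<in> SL2N0. \<exists>w \<in> D0. moeb T w = z} \<subseteq> {..n} \<times> {..n} \<times> {..n} \<times> {..n}"
  proof
    fix T assume "T \<in> {T \<in> SL2N0. \<exists>w \<in> D0. moeb T w = z}"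
    then obtain a b c d w where T: "T = (a, b, c, d)"
      and "(a, b, c, d) \<in> SL2N0" "w \<in> D0" "moeb (a, b, c, d) w = z"
      by (cases T) auto
    then have "\<forall>k \<in> {a, b, c, d}. real k \<le> real n"
      using moeb_preimage_entries_le real_nat_ceiling_ge unfolding n_def by (meson order_trans)
    then show "T \<in> {..n} \<times> {..n} \<times> {..n} \<times> {..n}" unfolding T by simp
  qed
  then show ?thesis by (rule finite_subset) simp
qed

lemma finite_SL2N0_preimage: "finite {w \<in> D0. \<exists>T \<in> SL2N0. moeb T w = z}"
proof -
  have "{w \<in> D0. \<exists>T \<in> SL2N0. moeb T w = z}
      = (\<Union>T \<in> {T \<in> SL2N0. \<exists>w \<in> D0. moeb T w = z}. moeb T -` {z} \<inter> D0)"
    by blast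
  also have "finite \<dots>"
    by (intro finite_UN_I finite_SL2N0_reaching finite_vimage_IntI inj_on_moeb) auto
  finally show ?thesis .
qed

lemma Fedges_iff: "(u, v) \<in> Fedges L R \<longleftrightarrow> u \<in> D0 \<and> (v = moeb L u \<or> v = moeb R u)"
  unfolding Fedges_def by auto

lemma trancl_Fedges_moeb:
  assumes "L \<in> SL2N0" "R \<in> SL2N0" "(w, z) \<in> (Fedges L R)\<^sup>+"
  shows "w \<in> D0 \<and> (\<exists>T \<in> SL2N0. moeb T w = z)"
  using assms(3)
proof induction
  case (base z)
  then show ?case using assms(1,2) by (auto simp: Fedges_iff)
next
  case (step y z)
  then obtain T where "T \<in> SL2N0" "moeb T w = y" "w \<in> D0" by blast
  moreover obtain S where "S \<in> SL2N0" "z = moeb S y"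
    using step.hyps(2) assms(1,2) unfolding Fedges_iff by blast
  ultimately show ?case using moeb_mult SL2N0_mult by metis
qed

lemma finite_ancestors:
  assumes "L \<in> SL2N0" "R \<in> SL2N0"
  shows "finite (ancestors L R z)"
  using finite_SL2N0_preimage
  by (rule finite_subset[rotated]) (auto simp: ancestors_def dest: trancl_Fedges_moeb[OF assms])

lemma left_right_pair_nonidentity:
  assumes "L \<in> SL2N0" "R \<in> SL2N0" "left_right_pair L R"
  shows "L \<noteq> (1, 0, 0, 1)" "R \<noteq> (1, 0, 0, 1)"
proof -
  have i: "Complex 1 1 \<in> D0" by (simp add: D0_def)
  have "moeb (1, 0, 0, 1) ` D0 = D0" by (simp add: moeb_def)
  then show "L \<noteq> (1, 0, 0, 1)" "R \<noteq> (1, 0, 0, 1)"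
    using assms moeb_in_D0 i unfolding left_right_pair_def by blast+
qed

lemma acyclic_Fedges:
  assumes "L \<in> SL2N0" "R \<in> SL2N0" "left_right_pair L R"
  shows "acyclic (Fedges L R)"
proof (rule acyclicI_order[where f = "\<lambda>w. (Im w, - Re w)"])
  fix u v assume "(u, v) \<in> Fedges L R"
  then obtain T where "T \<in> {L, R}" "u \<in> D0" "v = moeb T u" unfolding Fedges_iff by blast
  moreover have "T \<in> SL2N0" "T \<noteq> (1, 0, 0, 1)"
    using \<open>T \<in> {L, R}\<close> assms(1,2) left_right_pair_nonidentity[OF assms] by auto
  ultimately show "(Im v, - Re v) < (Im u, - Re u)" using moeb_lex_decreasing by blast
qed

lemma acyclic_ex_source_ancestor:
  assumes "acyclic E" "finite {w. (w, z) \<in> E\<^sup>+}"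
  shows "\<exists>r. (r, z) \<in> E\<^sup>* \<and> (\<forall>u. (u, r) \<notin> E)"
proof -
  define A where "A = {w. (w, z) \<in> E\<^sup>*}"
  have "A = insert z {w. (w, z) \<in> E\<^sup>+}" unfolding A_def by (auto simp: rtrancl_eq_or_trancl)
  then have "finite (E \<inter> A \<times> A)" using assms(2) by simp
  moreover have "acyclic (E \<inter> A \<times> A)" using assms(1) acyclic_subset by blast
  ultimately have "wf (E \<inter> A \<times> A)" by (rule finite_acyclic_wf)
  moreover have "z \<in> A" unfolding A_def by simp
  ultimately obtain r where "r \<in> A" "\<forall>u. (u, r) \<in> E \<inter> A \<times> A \<longrightarrow> u \<notin> A"
    unfolding wf_eq_minimal by blast
  moreover have "u \<in> A" if "(u, r) \<in> E" "r \<in> A" for u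
    using that unfolding A_def by (blast intro: converse_rtrancl_into_rtrancl)
  ultimately show ?thesis unfolding A_def by blast
qed

theorem theorem1p2:
  assumes "L \<in> SL2N0" and "R \<in> SL2N0" and "left_right_pair L R"
  shows "(\<forall>z\<in>D0. \<exists>r\<in>D0. same_component L R r z \<and> indegree_zero L R r)
       \<and> (\<forall>z\<in>D0. finite (ancestors L R z))"
proof (intro conjI ballI)
  fix z assume "z \<in> D0"
  obtain r where r: "(r, z) \<in> (Fedges L R)\<^sup>*" "\<forall>u. (u, r) \<notin> Fedges L R"
    using acyclic_ex_source_ancestor[OF acyclic_Fedges[OF assms]
        finite_ancestors[OF assms(1,2), unfolded ancestors_def]]
    by blast
  have "r \<in> D0"
    using r(1) \<open>z \<in> D0\<close> trancl_Fedges_moeb[OF assms(1,2)] by (auto simp: rtrancl_eq_or_trancl)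
  moreover have "same_component L R r z"
    using r(1) rtrancl_mono[of "Fedges L R"] unfolding same_component_def by blast
  ultimately show "\<exists>r\<in>D0. same_component L R r z \<and> indegree_zero L R r"
    using r(2) unfolding indegree_zero_def by blast
next
  show "finite (ancestors L R z)" for z by (rule finite_ancestors[OF assms(1,2)])
qed

end
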